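(* Consider the control-affine system $\dot x = f(x) + g(x)u$ with $f:\mathbb{R}^n\to\mathbb{R}^n$, $g:\mathbb{R}^n\to\mathbb{R}^{n\times m}$ locally Lipschitz, a continuously differentiable function $h:\mathbb{R}^n\to\mathbb{R}$ with safe set $\mathcal{C}=\{x:h(x)\ge0\}$ and boundary $\partial\mathcal{C}=\{x:h(x)=0\}$, and a controller $k:\mathbb{R}^n\to\mathbb{R}^m$ satisfying $L_fh(x)+L_gh(x)k(x)\ge-\alpha(h(x))$ for all $x\in\mathcal{C}$, with $\alpha$ a class-$\mathcal{K}_\infty^e$ function. Let $d>0$, $\delta>0$, $c>\frac{d}{\alpha(\delta)}$ and $\alpha'(r)=(1+c)\alpha(r)$. Assume: (i) there is $\mu>0$ with $\|L_gh(x)\|\ge\mu$ for all $x\in\partial\mathcal{C}$; (ii) $L_gh$ is Lipschitz on $\mathcal{C}$: there is $M>0$ with $\|L_gh(x)-L_gh(y)\|\le M\|x-y\|$ for all $x,y\in\mathcal{C}$; (iii) there is a class-$\mathcal{K}$ function $\beta$ with $h(x)\ge\beta\big(\inf_{y\in\partial\mathcal{C}}\|x-y\|\big)$. Define the adjusted controller $k_a(x) = k(x) + \frac{1}{\varepsilon}L_gh(x)^\top$ with $0<\varepsilon\le\frac{\mu^2}{4d}$. Then $$\dot h(x,k_a(x)) := L_fh(x)+L_gh(x)k_a(x) \ge -\alpha'(h(x)) + d$$ for all $x\in\mathcal{C}$ for which there exists $y\in\partial\mathcal{C}$ with $\|x-y\|\le\frac{\mu}{2M}$.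
   Context: $L_fh(x) = \frac{\partial h}{\partial x}(x)f(x)$, $L_gh(x) = \frac{\partial h}{\partial x}(x)g(x)$ (a row vector). A function $\alpha:[-b,a)\to\mathbb{R}$ is of class-$\mathcal{K}_\infty^e$ if it is continuous, strictly increasing, $\alpha(0)=0$, $\lim_{s\to\infty}\alpha(s)=\infty$, and $\alpha(y)\le0$ for $y\in[-b,0]$. A class-$\mathcal{K}$ function is a continuous strictly increasing function $\beta:[0,a)\to\mathbb{R}_{\ge0}$ with $\beta(0)=0$. *)

theory Defs
  imports "HOL-Analysis.Analysis"
begin

definition loc_lipschitz :: "('a::metric_space \<Rightarrow> 'b::metric_space) \<Rightarrow> bool" where
  "loc_lipschitz F \<longleftrightarrow>
     (\<forall>x. \<exists>r>0. \<exists>L. \<forall>y\<in>ball x r. \<forall>z\<in>ball x r. dist (F y) (F z) \<le> L * dist y z)"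

definition class_Kinf_e :: "(real \<Rightarrow> real) \<Rightarrow> real \<Rightarrow> bool" where
  "class_Kinf_e \<alpha> b \<longleftrightarrow> b > 0 \<and> continuous_on {-b..} \<alpha> \<and> strict_mono_on {-b..} \<alpha> \<and>
     \<alpha> 0 = 0 \<and> filterlim \<alpha> at_top at_top \<and> (\<forall>y\<in>{-b..0}. \<alpha> y \<le> 0)"

definition class_K :: "(real \<Rightarrow> real) \<Rightarrow> ereal \<Rightarrow> bool" where
  "class_K \<beta> a \<longleftrightarrow> a > 0 \<and> continuous_on {s. 0 \<le> s \<and> ereal s < a} \<beta> \<and>
     strict_mono_on {s. 0 \<le> s \<and> ereal s < a} \<beta> \<and> \<beta> 0 = 0 \<and>
     (\<forall>s. 0 \<le> s \<and> ereal s < a \<longrightarrow> \<beta> s \<ge> 0)"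

text \<open>Lie derivatives of h (with gradient gradh) along f and along the columns of g.
  L_gh x is the row vector (dh/dx) g(x), represented as a vector in real^'m.\<close>
definition Lfh :: "(real^'n \<Rightarrow> real^'n) \<Rightarrow> (real^'n \<Rightarrow> real^'n) \<Rightarrow> real^'n \<Rightarrow> real" where
  "Lfh gradh f x = gradh x \<bullet> f x"

definition Lgh :: "(real^'n \<Rightarrow> real^'n) \<Rightarrow> (real^'n \<Rightarrow> real^'m^'n) \<Rightarrow> real^'n \<Rightarrow> real^'m" where
  "Lgh gradh g x = gradh x v* g x"

end

theory Submission
  imports Defs
begin

text \<open>Within distance \<open>\<mu>/(2M)\<close> of the boundary, the Lipschitz bound (ii) keeps
  \<open>\<parallel>L_gh x\<parallel> \<ge> \<mu>/2\<close>, so the extra term \<open>(1/\<epsilon>) \<parallel>L_gh x\<parallel>\<^sup>2\<close> contributed by \<open>k_a\<close> is at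
  least \<open>\<mu>\<^sup>2/(4\<epsilon>) \<ge> d\<close>. The remaining loss \<open>c \<alpha>(h x)\<close> is nonnegative on the safe set,
  because \<open>c > d/\<alpha>(\<delta>) > 0\<close>.\<close>

lemma class_Kinf_e_pos:
  assumes "class_Kinf_e \<alpha> b" and "0 < s"
  shows "0 < \<alpha> s"
proof -
  have "b > 0" "strict_mono_on {-b..} \<alpha>" "\<alpha> 0 = 0"
    using assms(1) unfolding class_Kinf_e_def by auto
  then show ?thesis
    using assms(2) strict_mono_onD[of "{-b..}" \<alpha> 0 s] by auto
qed

lemma class_Kinf_e_nonneg:
  assumes "class_Kinf_e \<alpha> b" and "0 \<le> s"
  shows "0 \<le> \<alpha> s"
  using assms class_Kinf_e_pos[OF assms(1)] unfolding class_Kinf_e_def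
  by (cases "s = 0") (auto intro: less_imp_le)

lemma norm_lower_bound_near:
  fixes F :: "'a::real_normed_vector \<Rightarrow> 'b::real_normed_vector"
  assumes "\<mu> \<le> norm (F y)" and "norm (F x - F y) \<le> M * norm (x - y)"
    and "0 < M" and "norm (x - y) \<le> \<mu> / (2 * M)"
  shows "\<mu> / 2 \<le> norm (F x)"
proof -
  have "M * norm (x - y) \<le> \<mu> / 2"
    using assms(3,4) by (simp add: field_simps)
  moreover have "norm (F y) \<le> norm (F x) + norm (F x - F y)"
    by (metis norm_minus_commute norm_triangle_sub add.commute)
  ultimately show ?thesis
    using assms(1,2) by linarith
qed

lemma inner_scaleR_self_ge:
  fixes v :: "'a::real_inner"
  assumes "\<mu> / 2 \<le> norm v" and "0 < \<mu>" and "0 < d"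
    and "0 < \<epsilon>" and "\<epsilon> \<le> \<mu>\<^sup>2 / (4 * d)"
  shows "d \<le> v \<bullet> ((1 / \<epsilon>) *\<^sub>R v)"
proof -
  have "\<mu>\<^sup>2 / 4 \<le> (norm v)\<^sup>2"
    using power_mono[OF assms(1), of 2] assms(2) by (simp add: power_divide)
  then have "\<mu>\<^sup>2 / 4 \<le> v \<bullet> v"
    by (simp add: power2_norm_eq_inner)
  moreover have "d \<le> \<mu>\<^sup>2 / (4 * \<epsilon>)"
    using assms(3-5) by (simp add: field_simps)
  ultimately have "d \<le> (v \<bullet> v) / \<epsilon>"
    using assms(4) by (simp add: field_simps)
  then show ?thesis
    by simp
qed

theorem lemma3:
  fixes f :: "real^'n \<Rightarrow> real^'n" and g :: "real^'n \<Rightarrow> real^'m^'n"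
    and h :: "real^'n \<Rightarrow> real" and gradh :: "real^'n \<Rightarrow> real^'n"
    and k :: "real^'n \<Rightarrow> real^'m"
    and \<alpha> :: "real \<Rightarrow> real" and b :: real
    and \<beta> :: "real \<Rightarrow> real" and a :: ereal
    and d \<delta> c \<mu> M \<epsilon> :: real
  assumes f_lip: "loc_lipschitz f" and g_lip: "loc_lipschitz g"
    and h_deriv: "\<And>x. (h has_derivative (\<lambda>v. gradh x \<bullet> v)) (at x)"
    and h_C1: "continuous_on UNIV gradh"
    and alpha: "class_Kinf_e \<alpha> b"
    and k_cbf: "\<And>x. h x \<ge> 0 \<Longrightarrow> Lfh gradh f x + Lgh gradh g x \<bullet> k x \<ge> - \<alpha> (h x)"
    and d_pos: "d > 0" and delta_pos: "\<delta> > 0" and c_gt: "c > d / \<alpha> \<delta>"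
    and mu_pos: "\<mu> > 0"
    and i: "\<And>x. h x = 0 \<Longrightarrow> norm (Lgh gradh g x) \<ge> \<mu>"
    and M_pos: "M > 0"
    and ii: "\<And>x y. h x \<ge> 0 \<Longrightarrow> h y \<ge> 0 \<Longrightarrow>
               norm (Lgh gradh g x - Lgh gradh g y) \<le> M * norm (x - y)"
    and beta: "class_K \<beta> a"
    and iii: "\<And>x. h x \<ge> 0 \<Longrightarrow> ereal (infdist x {y. h y = 0}) < a \<and>
                    h x \<ge> \<beta> (infdist x {y. h y = 0})"
    and eps: "0 < \<epsilon>" "\<epsilon> \<le> \<mu>^2 / (4 * d)"
  shows "\<forall>x. h x \<ge> 0 \<and> (\<exists>y. h y = 0 \<and> norm (x - y) \<le> \<mu> / (2 * M)) \<longrightarrow>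
           Lfh gradh f x + Lgh gradh g x \<bullet> (k x + (1 / \<epsilon>) *\<^sub>R Lgh gradh g x)
             \<ge> - ((1 + c) * \<alpha> (h x)) + d"
proof (intro allI impI)
  fix x
  assume "h x \<ge> 0 \<and> (\<exists>y. h y = 0 \<and> norm (x - y) \<le> \<mu> / (2 * M))"
  then obtain y where hx: "h x \<ge> 0" and hy: "h y = 0" and near: "norm (x - y) \<le> \<mu> / (2 * M)"
    by blast
  let ?L = "Lgh gradh g"
  have "\<mu> / 2 \<le> norm (?L x)"
    using norm_lower_bound_near[OF i[OF hy] ii[OF hx] M_pos near] hy by simp
  then have gain: "d \<le> ?L x \<bullet> ((1 / \<epsilon>) *\<^sub>R ?L x)"
    using inner_scaleR_self_ge mu_pos d_pos eps by blast
  have "0 < d / \<alpha> \<delta>"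
    using class_Kinf_e_pos[OF alpha delta_pos] d_pos by simp
  then have "0 \<le> c * \<alpha> (h x)"
    using c_gt class_Kinf_e_nonneg[OF alpha hx] by simp
  then show "Lfh gradh f x + ?L x \<bullet> (k x + (1 / \<epsilon>) *\<^sub>R ?L x) \<ge> - ((1 + c) * \<alpha> (h x)) + d"
    using k_cbf[OF hx] gain by (simp add: inner_add_right algebra_simps)
qed

end
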